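(* Consider the discrete-time control system on $\mathrm{Aff}(2,\mathbb{R})$ given by $(x_{k+1},y_{k+1})=f_{u_k}(x_k,y_k)$, $u_k\in U$, where $f_u(x,y)=(h(u)x,\ a(x-1)+dy+g(u)x)$ with $a\in\mathbb{R}$, $d\in\mathbb{R}\setminus\{0\}$, $h:\mathbb{R}^m\to(0,\infty)$ and $g:\mathbb{R}^m\to\mathbb{R}$ smooth with $h(0)=1$, $g(0)=0$, and $U\subset\mathbb{R}^m$ a compact convex neighborhood of $0$. If $-a\,h'(0)\neq g'(0)(d-1)$ and $h'(0)\neq0$, then the system is accessible.
   Context: $\mathrm{Aff}(2,\mathbb{R})$ is $(0,\infty)\times\mathbb{R}$ with product $(x_1,y_1)\cdot(x_2,y_2)=(x_1x_2,\ y_2+x_2y_1)$. Solutions: $\varphi(0,p,u)=p$, $\varphi(k,p,u)=f_{u_{k-1}}\circ\cdots\circ f_{u_0}(p)$ for controls $u=(u_i)\in U^{\mathbb{N}_0}$. For a point $p$, $\mathcal{R}(p)=\bigcup_{k\in\mathbb{N}}\{\varphi(k,p,u)\}$ and $\mathcal{C}(p)=\bigcup_{k\in\mathbb{N}}\{q:\varphi(k,q,u)=p\text{ for some }u\}$. The system is forward accessible if $\mathrm{int}\,\mathcal{R}(p)\neq\emptyset$ for all $p$, backward accessible if $\mathrm{int}\,\mathcal{C}(p)\neq\emptyset$ for all $p$, and accessible if both hold. $h'(0)$, $g'(0)$ are the derivatives at $0$. *)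

theory Defs
  imports "HOL-Analysis.Analysis"
begin

fun Ck_fun :: "nat \<Rightarrow> ('a::euclidean_space \<Rightarrow> real) \<Rightarrow> bool" where
  "Ck_fun 0 f = continuous_on UNIV f"
| "Ck_fun (Suc k) f =
     ((\<forall>x. f differentiable (at x)) \<and>
      (\<forall>i\<in>Basis. Ck_fun k (\<lambda>x. frechet_derivative f (at x) i)))"

definition smooth_fun :: "('a::euclidean_space \<Rightarrow> real) \<Rightarrow> bool" where
  "smooth_fun f \<longleftrightarrow> (\<forall>k. Ck_fun k f)"

text \<open>The group Aff(2,R) as the state space (0,infinity) x R.\<close>
definition Aff2 :: "(real \<times> real) set" where
  "Aff2 = {p. fst p > 0}"

fun sol :: "('u \<Rightarrow> 's \<Rightarrow> 's) \<Rightarrow> nat \<Rightarrow> 's \<Rightarrow> (nat \<Rightarrow> 'u) \<Rightarrow> 's" where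
  "sol f 0 p u = p"
| "sol f (Suc k) p u = f (u k) (sol f k p u)"

definition reach_set :: "('u \<Rightarrow> 's \<Rightarrow> 's) \<Rightarrow> 'u set \<Rightarrow> 's \<Rightarrow> 's set" where
  "reach_set f U p = {sol f k p u | k u. k \<ge> 1 \<and> (\<forall>i. u i \<in> U)}"

definition ctrl_set :: "('u \<Rightarrow> 's \<Rightarrow> 's) \<Rightarrow> 'u set \<Rightarrow> 's set \<Rightarrow> 's \<Rightarrow> 's set" where
  "ctrl_set f U M p = {q \<in> M. \<exists>k u. k \<ge> 1 \<and> (\<forall>i. u i \<in> U) \<and> sol f k q u = p}"

definition forward_accessible ::
  "('u \<Rightarrow> 's::topological_space \<Rightarrow> 's) \<Rightarrow> 'u set \<Rightarrow> 's set \<Rightarrow> bool" where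
  "forward_accessible f U M \<longleftrightarrow> (\<forall>p\<in>M. interior (reach_set f U p) \<noteq> {})"

definition backward_accessible ::
  "('u \<Rightarrow> 's::topological_space \<Rightarrow> 's) \<Rightarrow> 'u set \<Rightarrow> 's set \<Rightarrow> bool" where
  "backward_accessible f U M \<longleftrightarrow> (\<forall>p\<in>M. interior (ctrl_set f U M p) \<noteq> {})"

definition accessible ::
  "('u \<Rightarrow> 's::topological_space \<Rightarrow> 's) \<Rightarrow> 'u set \<Rightarrow> 's set \<Rightarrow> bool" where
  "accessible f U M \<longleftrightarrow> forward_accessible f U M \<and> backward_accessible f U M"

definition aff_sys ::
  "real \<Rightarrow> real \<Rightarrow> ('u \<Rightarrow> real) \<Rightarrow> ('u \<Rightarrow> real) \<Rightarrow> 'u \<Rightarrow> real \<times> real \<Rightarrow> real \<times> real" where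
  "aff_sys a d h g u p = (h u * fst p, a * (fst p - 1) + d * snd p + g u * fst p)"

end

theory Submission
  imports Defs
begin

(*
  Choose v with h'(0) v \<noteq> 0 and a h'(0) v + (d - 1) g'(0) v \<noteq> 0 (possible since a vector
  space is not the union of two proper subspaces) and use only the controls t v; this reduces to a
  scalar control with \<alpha> = h'(0) v, \<beta> = g'(0) v. The two-step map (s, t) \<mapsto> f_t (f_s (x, y))
  has Jacobian determinant -\<alpha> x^2 (a \<alpha> + (d - 1) \<beta>) \<noteq> 0 at the origin, so by the open mapping
  theorem the image of a neighbourhood of 0 has interior: forward accessibility. The inverse maps
  f_u^-1 form a system of the same shape, with parameters -a/d, 1/d, 1/h and nondegeneracy
  quantity (a \<alpha> + (d - 1) \<beta>) / d^2; running it with reversed controls gives backward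
  accessibility.
*)

lemma open_mapping_surj_derivative:
  fixes F :: "'a::euclidean_space \<Rightarrow> 'b::euclidean_space"
  assumes "continuous_on UNIV F" and "(F has_derivative F') (at x)" and "surj F'"
    and "x \<in> interior T"
  shows "F x \<in> interior (F ` T)"
proof -
  have "linear F'"
    using assms(2) by (simp add: has_derivative_linear)
  then obtain R where "linear R" and "F' \<circ> R = id"
    using assms(3) real_vector.linear_surjective_right_inverse by blast
  then show ?thesis
    by (intro sussmann_open_mapping[OF open_UNIV assms(1) _ assms(2) _ _ _ assms(4)])
       (auto simp: linear_conv_bounded_linear)
qed

lemma surj_linear_plane:
  fixes A B C D :: real
  assumes "A * D - B * C \<noteq> 0"
  shows "surj (\<lambda>z. (A * fst z + B * snd z, C * fst z + D * snd z))"
  unfolding surj_def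
proof
  fix w :: "real \<times> real"
  obtain p q where w: "w = (p, q)"
    by fastforce
  define E where "E = A * D - B * C"
  have "E \<noteq> 0"
    using assms by (simp add: E_def)
  then have "A * ((D * p - B * q) / E) + B * ((A * q - C * p) / E) = p"
    "C * ((D * p - B * q) / E) + D * ((A * q - C * p) / E) = q"
    by (simp_all add: field_simps) (simp_all add: E_def algebra_simps)
  then show "\<exists>z. w = (A * fst z + B * snd z, C * fst z + D * snd z)"
    by (intro exI[of _ "((D * p - B * q) / E, (A * q - C * p) / E)"]) (simp add: w)
qed

lemma linear_functionals_common_nonzero:
  fixes f g :: "'a::real_vector \<Rightarrow> real"
  assumes "linear f" "linear g" and "f \<noteq> (\<lambda>v. 0)" "g \<noteq> (\<lambda>v. 0)"
  shows "\<exists>v. f v \<noteq> 0 \<and> g v \<noteq> 0"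
proof -
  obtain v w where v: "f v \<noteq> 0" and w: "g w \<noteq> 0"
    using assms(3,4) by (meson ext)
  have "f (v + w) = f v + f w" "g (v + w) = g v + g w"
    using assms(1,2) by (simp_all add: linear_add)
  then show ?thesis
    using v w by (metis add.right_neutral add_0)
qed

lemma has_real_derivative_along_line:
  assumes "(h has_derivative h') (at 0)"
  shows "((\<lambda>t. h (t *\<^sub>R v)) has_real_derivative h' v) (at 0)"
proof -
  have "((\<lambda>t. h (t *\<^sub>R v)) has_derivative (\<lambda>t. h' (t *\<^sub>R v))) (at 0)"
    using diff_chain_at[OF has_derivative_scaleR_left[OF has_derivative_ident], of h h' 0 v] assms
    by (simp add: o_def)
  moreover have "(\<lambda>t. h' (t *\<^sub>R v)) = (\<lambda>t. h' v * t)"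
    using assms by (auto simp: fun_eq_iff has_derivative_linear linear_scale)
  ultimately show ?thesis
    by (simp add: has_field_derivative_def)
qed

lemma zero_in_interior_line_preimage:
  fixes v :: "'a::real_normed_vector"
  assumes "0 \<in> interior U"
  shows "0 \<in> interior {t::real. t *\<^sub>R v \<in> U}"
proof -
  have "open ((\<lambda>t::real. t *\<^sub>R v) -` interior U)"
    by (intro continuous_open_vimage open_interior continuous_intros)
  moreover have "(\<lambda>t. t *\<^sub>R v) -` interior U \<subseteq> {t. t *\<^sub>R v \<in> U}"
    using interior_subset by auto
  ultimately have "(\<lambda>t. t *\<^sub>R v) -` interior U \<subseteq> interior {t. t *\<^sub>R v \<in> U}"
    by (simp add: interior_maximal)
  then show ?thesis
    using assms by auto
qed

lemma smooth_fun_continuous: "smooth_fun f \<Longrightarrow> continuous_on UNIV f"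
  by (metis Ck_fun.simps(1) smooth_fun_def)

lemma has_derivative_fst_real:
  assumes "(H has_real_derivative \<alpha>) (at (fst z))"
  shows "((\<lambda>z. H (fst z)) has_derivative (\<lambda>w. \<alpha> * fst w)) (at z)"
  using diff_chain_at[OF has_derivative_fst[OF has_derivative_ident] assms[unfolded has_field_derivative_def]]
  by (simp add: o_def mult.commute)

lemma has_derivative_snd_real:
  assumes "(H has_real_derivative \<alpha>) (at (snd z))"
  shows "((\<lambda>z. H (snd z)) has_derivative (\<lambda>w. \<alpha> * snd w)) (at z)"
  using diff_chain_at[OF has_derivative_snd[OF has_derivative_ident] assms[unfolded has_field_derivative_def]]
  by (simp add: o_def mult.commute)

lemma sol_Suc_first: "sol f (Suc k) p u = sol f k (f (u 0) p) (\<lambda>i. u (Suc i))"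
  by (induction k) simp_all

lemma sol_reparametrize: "sol (\<lambda>w. f (\<phi> w)) k p u = sol f k p (\<lambda>i. \<phi> (u i))"
  by (induction k) simp_all

lemma sol_in_invariant:
  assumes "\<And>w q. w \<in> U \<Longrightarrow> q \<in> M \<Longrightarrow> f w q \<in> M" and "\<forall>i. u i \<in> U" and "p \<in> M"
  shows "sol f k p u \<in> M"
  using assms by (induction k) simp_all

lemma sol_right_inverse_reversed:
  assumes "\<And>w q. f w (f' w q) = q"
  shows "sol f k (sol f' k p u) (\<lambda>i. u (k - Suc i)) = p"
proof (induction k)
  case (Suc k)
  have "sol f (Suc k) (sol f' (Suc k) p u) (\<lambda>i. u (Suc k - Suc i))
      = sol f k (f (u k) (f' (u k) (sol f' k p u))) (\<lambda>i. u (k - Suc i))"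
    by (subst sol_Suc_first) simp
  also have "\<dots> = p"
    using Suc.IH by (simp add: assms)
  finally show ?case .
qed simp

lemma reach_set_reparametrize_subset:
  assumes "\<phi> ` I \<subseteq> U"
  shows "reach_set (\<lambda>w. f (\<phi> w)) I p \<subseteq> reach_set f U p"
  using assms by (fastforce simp: reach_set_def sol_reparametrize)

lemma ctrl_set_reparametrize_subset:
  assumes "\<phi> ` I \<subseteq> U"
  shows "ctrl_set (\<lambda>w. f (\<phi> w)) I M p \<subseteq> ctrl_set f U M p"
  using assms by (fastforce simp: ctrl_set_def sol_reparametrize)

lemma accessible_reparametrize:
  assumes "accessible (\<lambda>w. f (\<phi> w)) I M" and "\<phi> ` I \<subseteq> U"
  shows "accessible f U M"
proof -
  have "interior (reach_set f U p) \<noteq> {}" "interior (ctrl_set f U M p) \<noteq> {}" if "p \<in> M" for p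
    using assms(1) that interior_mono[OF reach_set_reparametrize_subset[OF assms(2)]]
      interior_mono[OF ctrl_set_reparametrize_subset[OF assms(2)]]
    unfolding accessible_def forward_accessible_def backward_accessible_def by blast+
  then show ?thesis
    unfolding accessible_def forward_accessible_def backward_accessible_def by blast
qed

lemma reach_set_right_inverse_subset_ctrl_set:
  assumes "\<And>w q. f w (f' w q) = q" and "\<And>w q. w \<in> U \<Longrightarrow> q \<in> M \<Longrightarrow> f' w q \<in> M"
    and "p \<in> M"
  shows "reach_set f' U p \<subseteq> ctrl_set f U M p"
proof
  fix q assume "q \<in> reach_set f' U p"
  then obtain k u where "k \<ge> 1" and u: "\<forall>i. u i \<in> U" and q: "q = sol f' k p u"
    by (auto simp: reach_set_def)
  moreover have "q \<in> M"
    using sol_in_invariant[OF assms(2) u assms(3)] q by simp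
  moreover have "sol f k q (\<lambda>i. u (k - Suc i)) = p"
    using q sol_right_inverse_reversed[of f f'] assms(1) by simp
  moreover have "\<forall>i. u (k - Suc i) \<in> U"
    using u by simp
  ultimately show "q \<in> ctrl_set f U M p"
    unfolding ctrl_set_def by (intro CollectI conjI exI[of _ k] exI[of _ "\<lambda>i. u (k - Suc i)"])
qed

lemma backward_accessible_if_right_inverse_forward_accessible:
  assumes "forward_accessible f' U M"
    and "\<And>w q. f w (f' w q) = q" and "\<And>w q. w \<in> U \<Longrightarrow> q \<in> M \<Longrightarrow> f' w q \<in> M"
  shows "backward_accessible f U M"
  unfolding backward_accessible_def
proof
  fix p assume p: "p \<in> M"
  have "reach_set f' U p \<subseteq> ctrl_set f U M p"
    using assms(2,3) p by (rule reach_set_right_inverse_subset_ctrl_set)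
  then show "interior (ctrl_set f U M p) \<noteq> {}"
    using assms(1) p interior_mono unfolding forward_accessible_def by blast
qed

lemma interior_reach_set_two_steps:
  fixes f :: "'u::euclidean_space \<Rightarrow> 's::euclidean_space \<Rightarrow> 's"
  assumes "continuous_on UNIV (\<lambda>z. f (snd z) (f (fst z) p))"
    and "((\<lambda>z. f (snd z) (f (fst z) p)) has_derivative F') (at 0)" and "surj F'"
    and "0 \<in> interior I"
  shows "interior (reach_set f I p) \<noteq> {}"
proof -
  let ?F = "\<lambda>z. f (snd z) (f (fst z) p)"
  have "0 \<in> interior (I \<times> I)"
    using assms(4) by (simp add: interior_Times zero_prod_def)
  then have F0: "?F 0 \<in> interior (?F ` (I \<times> I))"
    by (rule open_mapping_surj_derivative[OF assms(1-3)])
  have "?F ` (I \<times> I) \<subseteq> reach_set f I p"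
  proof safe
    fix s t assume "s \<in> I" "t \<in> I"
    then have "\<forall>i. (if i = 0 then s else t) \<in> I"
      by simp
    moreover have "?F (s, t) = sol f 2 p (\<lambda>i. if i = 0 then s else t)"
      by (simp add: numeral_2_eq_2)
    ultimately show "?F (s, t) \<in> reach_set f I p"
      unfolding reach_set_def
      by (intro CollectI exI[of _ "2::nat"] exI[of _ "\<lambda>i. if i = 0 then s else t"] conjI) simp_all
  qed
  then show ?thesis
    using F0 interior_mono by blast
qed

lemma aff_sys_two_steps_has_derivative:
  fixes H G :: "real \<Rightarrow> real"
  assumes "H 0 = 1" and "G 0 = 0"
    and "(H has_real_derivative \<alpha>) (at 0)" and "(G has_real_derivative \<beta>) (at 0)"
  shows "((\<lambda>z. aff_sys a d H G (snd z) (aff_sys a d H G (fst z) (x, y))) has_derivative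
      (\<lambda>w. (\<alpha> * x * fst w + \<alpha> * x * snd w, (a * \<alpha> + d * \<beta>) * x * fst w + \<beta> * x * snd w))) (at 0)"
proof -
  have dH: "(H has_real_derivative \<alpha>) (at (fst (0::real \<times> real)))"
      "(H has_real_derivative \<alpha>) (at (snd (0::real \<times> real)))"
    and dG: "(G has_real_derivative \<beta>) (at (fst (0::real \<times> real)))"
      "(G has_real_derivative \<beta>) (at (snd (0::real \<times> real)))"
    using assms(3,4) by simp_all
  show ?thesis
    unfolding aff_sys_def fst_conv snd_conv
    by (rule derivative_eq_intros has_derivative_fst_real has_derivative_snd_real dH dG refl)+
       (simp add: fun_eq_iff assms(1,2) algebra_simps)
qed

lemma aff_sys_forward_accessible:
  fixes H G :: "real \<Rightarrow> real"
  assumes "continuous_on UNIV H" "continuous_on UNIV G" and "H 0 = 1" "G 0 = 0"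
    and "(H has_real_derivative \<alpha>) (at 0)" "(G has_real_derivative \<beta>) (at 0)"
    and "\<alpha> \<noteq> 0" "a * \<alpha> + (d - 1) * \<beta> \<noteq> 0" and "0 \<in> interior I"
  shows "forward_accessible (aff_sys a d H G) I Aff2"
  unfolding forward_accessible_def
proof
  fix p assume "p \<in> Aff2"
  then obtain x y where p: "p = (x, y)" and "x > 0"
    by (cases p) (auto simp: Aff2_def)
  have "continuous_on UNIV (\<lambda>z. aff_sys a d H G (snd z) (aff_sys a d H G (fst z) p))"
    unfolding aff_sys_def
    by (intro continuous_intros continuous_on_compose2[OF assms(1)] continuous_on_compose2[OF assms(2)])
       auto
  moreover have "(\<alpha> * x) * (\<beta> * x) - (\<alpha> * x) * ((a * \<alpha> + d * \<beta>) * x)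
      = - \<alpha> * x\<^sup>2 * (a * \<alpha> + (d - 1) * \<beta>)"
    by (simp add: algebra_simps power2_eq_square)
  then have "surj (\<lambda>w. (\<alpha> * x * fst w + \<alpha> * x * snd w, (a * \<alpha> + d * \<beta>) * x * fst w + \<beta> * x * snd w))"
    using assms(7,8) \<open>x > 0\<close> by (intro surj_linear_plane) simp
  ultimately show "interior (reach_set (aff_sys a d H G) I p) \<noteq> {}"
    using interior_reach_set_two_steps aff_sys_two_steps_has_derivative[OF assms(3-6)] assms(9)
    unfolding p by blast
qed

definition aff_sys_inv ::
  "real \<Rightarrow> real \<Rightarrow> ('u \<Rightarrow> real) \<Rightarrow> ('u \<Rightarrow> real) \<Rightarrow> 'u \<Rightarrow> real \<times> real \<Rightarrow> real \<times> real" where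
  "aff_sys_inv a d H G = aff_sys (- a / d) (1 / d) (\<lambda>u. 1 / H u) (\<lambda>u. (a * (1 - 1 / H u) - G u / H u) / d)"

lemma aff_sys_aff_sys_inv:
  assumes "d \<noteq> 0" and "H u \<noteq> 0"
  shows "aff_sys a d H G u (aff_sys_inv a d H G u q) = q"
  using assms by (cases q) (simp add: aff_sys_inv_def aff_sys_def field_simps)

lemma aff_sys_inv_Aff2:
  assumes "H u > 0" and "q \<in> Aff2"
  shows "aff_sys_inv a d H G u q \<in> Aff2"
  using assms by (simp add: aff_sys_inv_def aff_sys_def Aff2_def)

lemma aff_sys_accessible:
  fixes H G :: "real \<Rightarrow> real"
  assumes "d \<noteq> 0" and "\<forall>t. H t > 0"
    and "continuous_on UNIV H" "continuous_on UNIV G" and "H 0 = 1" "G 0 = 0"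
    and "(H has_real_derivative \<alpha>) (at 0)" "(G has_real_derivative \<beta>) (at 0)"
    and "\<alpha> \<noteq> 0" "a * \<alpha> + (d - 1) * \<beta> \<noteq> 0" and "0 \<in> interior I"
  shows "accessible (aff_sys a d H G) I Aff2"
proof -
  have H_nonzero: "H t \<noteq> 0" for t
    using assms(2) by (metis less_irrefl)
  have "forward_accessible (aff_sys_inv a d H G) I Aff2"
    unfolding aff_sys_inv_def
  proof (rule aff_sys_forward_accessible[where \<alpha> = "- \<alpha>" and \<beta> = "(a * \<alpha> - \<beta>) / d"])
    show "continuous_on UNIV (\<lambda>u. 1 / H u)" "continuous_on UNIV (\<lambda>u. (a * (1 - 1 / H u) - G u / H u) / d)"
      using assms(1,3,4) H_nonzero by (auto intro!: continuous_intros)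
    show "((\<lambda>u. 1 / H u) has_real_derivative - \<alpha>) (at 0)"
      "((\<lambda>u. (a * (1 - 1 / H u) - G u / H u) / d) has_real_derivative (a * \<alpha> - \<beta>) / d) (at 0)"
      using assms(1,5,6) H_nonzero
      by (auto intro!: derivative_eq_intros assms(7,8) simp: field_simps)
    have "- a / d * - \<alpha> + (1 / d - 1) * ((a * \<alpha> - \<beta>) / d) = (a * \<alpha> + (d - 1) * \<beta>) / d\<^sup>2"
      using assms(1) by (simp add: field_simps power2_eq_square)
    then show "- a / d * - \<alpha> + (1 / d - 1) * ((a * \<alpha> - \<beta>) / d) \<noteq> 0"
      using assms(1,10) by simp
  qed (use assms(5,6,9,11) in simp_all)
  then have "backward_accessible (aff_sys a d H G) I Aff2"
  proof (rule backward_accessible_if_right_inverse_forward_accessible)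
    show "aff_sys a d H G w (aff_sys_inv a d H G w q) = q" for w q
      using assms(1) H_nonzero by (rule aff_sys_aff_sys_inv)
    show "aff_sys_inv a d H G w q \<in> Aff2" if "q \<in> Aff2" for w q
      using assms(2) that by (simp add: aff_sys_inv_Aff2)
  qed
  then show ?thesis
    using aff_sys_forward_accessible[OF assms(3-11)] by (simp add: accessible_def)
qed

theorem proposition3p6:
  fixes a d :: real
    and h g :: "real ^ 'm \<Rightarrow> real"
    and h' g' :: "real ^ 'm \<Rightarrow> real"
    and U :: "(real ^ 'm) set"
  assumes "d \<noteq> 0"
    and "\<forall>v. h v > 0"
    and "smooth_fun h" and "smooth_fun g"
    and "h 0 = 1" and "g 0 = 0"
    and "compact U" and "convex U" and "0 \<in> interior U"
    and "(h has_derivative h') (at 0)"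
    and "(g has_derivative g') (at 0)"
    and "(\<lambda>v. - a * h' v) \<noteq> (\<lambda>v. g' v * (d - 1))"
    and "h' \<noteq> (\<lambda>v. 0)"
  shows "accessible (aff_sys a d h g) U Aff2"
proof -
  have "linear h'" "linear g'"
    using assms(10,11) by (simp_all add: has_derivative_linear)
  then have lin: "linear (\<lambda>v. a * h' v + (d - 1) * g' v)"
    by (auto intro!: linearI simp: linear_add linear_scale algebra_simps)
  have nonzero: "(\<lambda>v. a * h' v + (d - 1) * g' v) \<noteq> (\<lambda>v. 0)"
    using assms(12) by (auto simp: fun_eq_iff algebra_simps) metis
  obtain v where "h' v \<noteq> 0" "a * h' v + (d - 1) * g' v \<noteq> 0"
    using linear_functionals_common_nonzero[OF \<open>linear h'\<close> lin assms(13) nonzero] by blast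
  define I where "I = {t. t *\<^sub>R v \<in> U}"
  have "0 \<in> interior I"
    unfolding I_def using assms(9) by (rule zero_in_interior_line_preimage)
  have "accessible (aff_sys a d (\<lambda>t. h (t *\<^sub>R v)) (\<lambda>t. g (t *\<^sub>R v))) I Aff2"
    by (rule aff_sys_accessible[OF assms(1) _ _ _ _ _ has_real_derivative_along_line[OF assms(10)]
          has_real_derivative_along_line[OF assms(11)]])
       (use assms(2,5,6) \<open>h' v \<noteq> 0\<close> \<open>a * h' v + (d - 1) * g' v \<noteq> 0\<close> \<open>0 \<in> interior I\<close> in
        \<open>auto intro!: continuous_on_compose2[OF smooth_fun_continuous[OF assms(3)]]
          continuous_on_compose2[OF smooth_fun_continuous[OF assms(4)]] continuous_intros\<close>)
  moreover have "aff_sys a d (\<lambda>t. h (t *\<^sub>R v)) (\<lambda>t. g (t *\<^sub>R v)) = (\<lambda>t. aff_sys a d h g (t *\<^sub>R v))"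
    by (simp add: aff_sys_def fun_eq_iff)
  ultimately show ?thesis
    by (intro accessible_reparametrize[where \<phi> = "\<lambda>t. t *\<^sub>R v" and I = I]) (auto simp: I_def)
qed

end
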